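(* Let $X$ be a real Hilbert space and let $\eta,\eta'\in(0,1)$ with $\eta<\eta'$. If $\delta\in(0,1)$ satisfies $\frac{\delta+\eta}{1-\delta}\le\eta'$ and $x,y\in X$ are linearly independent vectors such that $\cos(x,y)\le\eta$ and $\cos(y-x,-x)\le\delta$, then $\|x\|\le\eta'\|y\|$.
   Context: For nonzero $u,w\in X$, $\cos(u,w)=\frac{\langle u,w\rangle}{\|u\|\|w\|}$. *)

theory Defs
  imports "HOL-Analysis.Analysis"
begin

definition vcos :: "'a::real_inner \<Rightarrow> 'a \<Rightarrow> real" where
  "vcos u w = inner u w / (norm u * norm w)"

end

theory Submission
  imports Defs
begin

(* Expanding vcos (y - x) (- x) gives norm x ^ 2 - inner x y <= delta * norm (y - x) * norm x.
   Bounding inner x y by eta * norm x * norm y and norm (y - x) by norm x + norm y,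
   then dividing by norm x, yields (1 - delta) * norm x <= (eta + delta) * norm y. *)

lemma inner_le_of_vcos_le:
  fixes u w :: "'a::real_inner"
  assumes "vcos u w \<le> c"
  shows "inner u w \<le> c * norm u * norm w"
proof (cases "u = 0 \<or> w = 0")
  case True
  then show ?thesis by auto
next
  case False
  then have "norm u * norm w > 0" by simp
  with assms show ?thesis
    by (simp add: vcos_def divide_le_eq mult.assoc)
qed

lemma inner_diff_minus_left:
  fixes x y :: "'a::real_inner"
  shows "inner (y - x) (- x) = (norm x)\<^sup>2 - inner x y"
  by (simp add: inner_diff_left inner_diff_right inner_commute power2_norm_eq_inner)

lemma norm_le_of_vcos_bounds:
  fixes x y :: "'a::real_inner"
  assumes "x \<noteq> 0" "0 \<le> \<delta>"
    and "vcos x y \<le> \<eta>" "vcos (y - x) (- x) \<le> \<delta>"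
  shows "(1 - \<delta>) * norm x \<le> (\<eta> + \<delta>) * norm y"
proof -
  have xy: "inner x y \<le> \<eta> * norm x * norm y"
    using assms(3) by (rule inner_le_of_vcos_le)
  have "(norm x)\<^sup>2 - inner x y \<le> \<delta> * norm (y - x) * norm x"
    using inner_le_of_vcos_le [OF assms(4)] by (simp only: inner_diff_minus_left norm_minus_cancel)
  also have "\<dots> \<le> \<delta> * (norm x + norm y) * norm x"
    using assms(2) norm_triangle_ineq4 [of y x]
    by (intro mult_right_mono mult_left_mono) auto
  finally have "norm x * ((1 - \<delta>) * norm x) \<le> norm x * ((\<eta> + \<delta>) * norm y)"
    using xy by (simp add: power2_eq_square algebra_simps)
  then show ?thesis
    using assms(1) by simp
qed

theorem fact4p7:
  fixes x y :: "'a::{real_inner, complete_space}"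
    and \<eta> \<eta>' \<delta> :: real
  assumes "0 < \<eta>" "\<eta> < 1" "0 < \<eta>'" "\<eta>' < 1" "\<eta> < \<eta>'"
    and "0 < \<delta>" "\<delta> < 1"
    and "(\<delta> + \<eta>) / (1 - \<delta>) \<le> \<eta>'"
    and "x \<noteq> y" "independent {x, y}"
    and "vcos x y \<le> \<eta>"
    and "vcos (y - x) (- x) \<le> \<delta>"
  shows "norm x \<le> \<eta>' * norm y"
proof -
  have "x \<noteq> 0"
    using assms(10) dependent_zero by blast
  then have "(1 - \<delta>) * norm x \<le> (\<eta> + \<delta>) * norm y"
    using assms(6,11,12) by (intro norm_le_of_vcos_bounds) auto
  then have "norm x \<le> (\<delta> + \<eta>) / (1 - \<delta>) * norm y"
    using assms(7) by (simp add: field_simps)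
  also have "\<dots> \<le> \<eta>' * norm y"
    using assms(8) by (intro mult_right_mono) auto
  finally show ?thesis .
qed

end
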